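(* Let $G$ be an oriented graph derived from a Burling tree $T$ and let $uv$ be a bottom arc of $G$ with respect to $T$. Let $G'$ be obtained from $G$ by subdividing $uv$ into $uwv$ (removing the arc $uv$ and adding a new vertex $w$ with arcs $uw$ and $wv$). Then $G'$ can be derived from a Burling tree $T'$ in such a way that, with respect to $T'$: $uw$ is a bottom arc of $G'$; $wv$ is both a bottom arc and a top arc of $G'$; every top arc of $G$ with respect to $T$ other than $uv$ is a top arc of $G'$; and every bottom arc of $G$ with respect to $T$ other than $uv$ is a bottom arc of $G'$.
   Context: Oriented graphs are finite, without loops, multiple arcs or pairs of opposite arcs. In a rooted tree $T$ with root $r$, each non-root vertex $v$ has a parent $p(v)$; children, leaves, ancestors and descendants are as usual. A branch is a sequence $v_1\dots v_k$ ($k\ge0$) with $v_i$ the parent of $v_{i+1}$; it starts at $v_1$. A Burling tree is a 4-tuple $(T,r,\ell,c)$: $T$ a rooted tree with root $r$; $\ell$ assigns to each non-leaf vertex $v$ one of its children $\ell(v)$ (the last-born of $v$); $c$ assigns to every vertex $v$ that is neither the root nor a last-born the vertex-set of a (possibly empty) branch starting at $\ell(p(v))$, and $c(v)=\emptyset$ if $v$ is the root or a last-born. The oriented graph fully derived from it has vertex-set $V(T)$ and an arc $uv$ iff $v\in c(u)$; an oriented graph is derived from the Burling tree if it is an induced subgraph of the fully derived one. If $G$ is derived from $T$ and $uv$ is an arc of $G$, then all out-neighbors of $u$ lie on one branch of $T$; $uv$ is a top arc with respect to $T$ if $v$ is the out-neighbor of $u$ closest in $T$ to the root, and a bottom arc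 with respect to $T$ if $v$ is the out-neighbor of $u$ furthest in $T$ from the root. *)

theory Defs
  imports Main
begin

text \<open>A Burling tree (T, r, l, c). The rooted tree T is given by a finite vertex set,
  a root, and a parent function (meaningful on non-root vertices).\<close>
record 'a btree =
  bV :: "'a set"
  broot :: 'a
  bpar :: "'a \<Rightarrow> 'a"
  blb :: "'a \<Rightarrow> 'a"          \<comment> \<open>last-born child of a non-leaf vertex\<close>
  bc :: "'a \<Rightarrow> 'a set"

definition rooted_tree :: "'a set \<Rightarrow> 'a \<Rightarrow> ('a \<Rightarrow> 'a) \<Rightarrow> bool" where
  "rooted_tree V r p \<longleftrightarrow> finite V \<and> r \<in> V \<and> (\<forall>v\<in>V - {r}. p v \<in> V)
     \<and> (\<forall>v\<in>V. \<exists>n. (p ^^ n) v = r)"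

definition children :: "'a btree \<Rightarrow> 'a \<Rightarrow> 'a set" where
  "children T x = {v \<in> bV T. v \<noteq> broot T \<and> bpar T v = x}"

definition is_leaf :: "'a btree \<Rightarrow> 'a \<Rightarrow> bool" where
  "is_leaf T x \<longleftrightarrow> children T x = {}"

definition anc :: "'a btree \<Rightarrow> 'a \<Rightarrow> 'a \<Rightarrow> bool" where
  "anc T x y \<longleftrightarrow> (\<exists>n. (bpar T ^^ n) y = x \<and> (\<forall>k<n. (bpar T ^^ k) y \<noteq> broot T))"

definition is_branch :: "'a btree \<Rightarrow> 'a list \<Rightarrow> bool" where
  "is_branch T xs \<longleftrightarrow> set xs \<subseteq> bV T \<and>
     (\<forall>i. Suc i < length xs \<longrightarrow> xs ! Suc i \<noteq> broot T \<and> bpar T (xs ! Suc i) = xs ! i)"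

definition is_last_born :: "'a btree \<Rightarrow> 'a \<Rightarrow> bool" where
  "is_last_born T v \<longleftrightarrow> (\<exists>x\<in>bV T. \<not> is_leaf T x \<and> blb T x = v)"

definition burling_tree :: "'a btree \<Rightarrow> bool" where
  "burling_tree T \<longleftrightarrow> rooted_tree (bV T) (broot T) (bpar T)
     \<and> (\<forall>x\<in>bV T. \<not> is_leaf T x \<longrightarrow> blb T x \<in> children T x)
     \<and> (\<forall>v\<in>bV T. v \<noteq> broot T \<and> \<not> is_last_born T v \<longrightarrow>
          (\<exists>xs. is_branch T xs \<and> (xs \<noteq> [] \<longrightarrow> hd xs = blb T (bpar T v)) \<and> bc T v = set xs))
     \<and> (\<forall>v\<in>bV T. v = broot T \<or> is_last_born T v \<longrightarrow> bc T v = {})"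

definition oriented_graph :: "'a set \<Rightarrow> ('a \<times> 'a) set \<Rightarrow> bool" where
  "oriented_graph V E \<longleftrightarrow> finite V \<and> E \<subseteq> V \<times> V \<and> (\<forall>x. (x, x) \<notin> E)
     \<and> (\<forall>x y. (x, y) \<in> E \<longrightarrow> (y, x) \<notin> E)"

text \<open>G = (V,E) is derived from T: an induced subgraph of the fully derived graph.\<close>
definition derived :: "'a btree \<Rightarrow> 'a set \<Rightarrow> ('a \<times> 'a) set \<Rightarrow> bool" where
  "derived T V E \<longleftrightarrow> V \<subseteq> bV T \<and> E \<subseteq> V \<times> V \<and>
     (\<forall>u\<in>V. \<forall>v\<in>V. (u, v) \<in> E \<longleftrightarrow> v \<in> bc T u)"

definition top_arc :: "'a btree \<Rightarrow> ('a \<times> 'a) set \<Rightarrow> 'a \<Rightarrow> 'a \<Rightarrow> bool" where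
  "top_arc T E u v \<longleftrightarrow> (u, v) \<in> E \<and> (\<forall>x. (u, x) \<in> E \<longrightarrow> anc T v x)"

definition bottom_arc :: "'a btree \<Rightarrow> ('a \<times> 'a) set \<Rightarrow> 'a \<Rightarrow> 'a \<Rightarrow> bool" where
  "bottom_arc T E u v \<longleftrightarrow> (u, v) \<in> E \<and> (\<forall>x. (u, x) \<in> E \<longrightarrow> anc T x v)"

definition subdiv_arcs :: "('a \<times> 'a) set \<Rightarrow> 'a \<Rightarrow> 'a \<Rightarrow> 'a \<Rightarrow> ('a \<times> 'a) set" where
  "subdiv_arcs E u v w = (E - {(u, v)}) \<union> {(u, w), (w, v)}"

end

theory Submission
  imports Defs
begin

text \<open>Let q be the parent of v. As u has an out-neighbour, it is not a last-born, so the set M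
  of children of q other than u contains the last-born of q. Insert a new vertex a1 as the
  last-born child of q and the parent of M, and then a new vertex a2 as the last-born child of a1
  and the parent of M. Such an insertion only adds a new vertex to some c-sets, so G stays derived,
  with the same top and bottom arcs, and the branch c(u) now passes through a1 a2 v. Finally add w
  as a leaf child of a1 with c(w) = {a2, v}, a branch starting at the last-born a2 of a1, and cut
  c(u) off after a1, appending w. Since uv is a bottom arc, every other out-neighbour of u lies
  above a1, so the out-neighbours of u in G' are those in G with v replaced by w, and w lies below
  all of them. A vertex w of T outside G is first renamed away.\<close>

section \<open>Ancestors\<close>

text \<open>The climb stops at the root, whose parent is unspecified.\<close>
inductive_set ancestors :: "'a btree \<Rightarrow> 'a \<Rightarrow> 'a set" for T :: "'a btree" and y :: 'a where
  self: "y \<in> ancestors T y"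
| parent: "z \<in> ancestors T y \<Longrightarrow> z \<noteq> broot T \<Longrightarrow> bpar T z \<in> ancestors T y"

lemma funpow_parent_in_ancestors:
  "\<forall>k<n. (bpar T ^^ k) y \<noteq> broot T \<Longrightarrow> (bpar T ^^ n) y \<in> ancestors T y"
proof (induction n)
  case (Suc n)
  then show ?case by (simp add: ancestors.parent)
qed (simp add: ancestors.self)

lemma anc_iff_ancestors: "anc T x y \<longleftrightarrow> x \<in> ancestors T y"
proof
  assume "anc T x y"
  then obtain n where "(bpar T ^^ n) y = x" "\<forall>k<n. (bpar T ^^ k) y \<noteq> broot T"
    unfolding anc_def by blast
  then show "x \<in> ancestors T y"
    using funpow_parent_in_ancestors by metis
next
  assume "x \<in> ancestors T y"
  then show "anc T x y"
  proof induction
    case self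
    show ?case unfolding anc_def by (rule exI[of _ 0]) simp
  next
    case (parent z)
    then obtain n where n: "(bpar T ^^ n) y = z" "\<forall>k<n. (bpar T ^^ k) y \<noteq> broot T"
      unfolding anc_def by blast
    show ?case
      unfolding anc_def
      by (rule exI[of _ "Suc n"]) (use n parent.hyps(2) in \<open>auto simp: less_Suc_eq\<close>)
  qed
qed

lemma root_reachable_iff: "(\<exists>n. (bpar T ^^ n) y = broot T) \<longleftrightarrow> broot T \<in> ancestors T y"
proof
  assume "\<exists>n. (bpar T ^^ n) y = broot T"
  then obtain n where "(bpar T ^^ n) y = broot T" "\<forall>k<n. (bpar T ^^ k) y \<noteq> broot T"
    using exists_least_iff[of "\<lambda>n. (bpar T ^^ n) y = broot T"] by blast
  then show "broot T \<in> ancestors T y"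
    using funpow_parent_in_ancestors by metis
next
  assume "broot T \<in> ancestors T y"
  then show "\<exists>n. (bpar T ^^ n) y = broot T"
    by (auto simp: anc_iff_ancestors[symmetric] anc_def)
qed

lemma ancestors_trans: "x \<in> ancestors T z \<Longrightarrow> z \<in> ancestors T y \<Longrightarrow> x \<in> ancestors T y"
  by (induction rule: ancestors.induct) (auto intro: ancestors.parent)

lemma parent_in_ancestors: "y \<noteq> broot T \<Longrightarrow> bpar T y \<in> ancestors T y"
  by (simp add: ancestors.self ancestors.parent)

lemma ancestors_cases: "x \<in> ancestors T y \<Longrightarrow> x = y \<or> (y \<noteq> broot T \<and> x \<in> ancestors T (bpar T y))"
  by (induction rule: ancestors.induct) (auto intro: ancestors.parent ancestors.self)

lemma ancestors_step: "y \<noteq> broot T \<Longrightarrow> ancestors T y = insert y (ancestors T (bpar T y))"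
  using ancestors_cases[of _ T y] by (auto intro: ancestors.self ancestors_trans[OF _ parent_in_ancestors])

abbreviation rooted :: "'a btree \<Rightarrow> bool" where
  "rooted T \<equiv> rooted_tree (bV T) (broot T) (bpar T)"

lemma rooted_root_in_ancestors: "rooted T \<Longrightarrow> y \<in> bV T \<Longrightarrow> broot T \<in> ancestors T y"
  unfolding rooted_tree_def root_reachable_iff[symmetric] by blast

lemma rooted_parent_in: "rooted T \<Longrightarrow> y \<in> bV T \<Longrightarrow> y \<noteq> broot T \<Longrightarrow> bpar T y \<in> bV T"
  unfolding rooted_tree_def by blast

lemma rooted_ancestors_subset:
  assumes "rooted T" "y \<in> bV T"
  shows "ancestors T y \<subseteq> bV T"
proof
  fix x assume "x \<in> ancestors T y"
  then show "x \<in> bV T"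
  proof induction
    case (parent z)
    then show ?case using rooted_parent_in[OF assms(1)] by blast
  qed (rule assms(2))
qed

definition depth :: "'a btree \<Rightarrow> 'a \<Rightarrow> nat" where
  "depth T y = (LEAST n. (bpar T ^^ n) y = broot T)"

lemma depth_parent_less:
  assumes "rooted T" "y \<in> bV T" "y \<noteq> broot T"
  shows "depth T (bpar T y) < depth T y"
proof -
  have "\<exists>n. (bpar T ^^ n) y = broot T"
    using assms(1,2) unfolding rooted_tree_def by blast
  then have "(bpar T ^^ depth T y) y = broot T"
    unfolding depth_def by (rule LeastI_ex)
  moreover from this assms(3) obtain m where m: "depth T y = Suc m"
    by (cases "depth T y") auto
  ultimately have "(bpar T ^^ m) (bpar T y) = broot T"
    by (simp add: funpow_Suc_right del: funpow.simps)
  then have "depth T (bpar T y) \<le> m"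
    unfolding depth_def by (rule Least_le)
  with m show ?thesis by simp
qed

lemma depth_ancestor_less:
  assumes "rooted T" "y \<in> bV T" "x \<in> ancestors T y" "x \<noteq> y"
  shows "depth T x < depth T y"
  using assms(3,4)
proof induction
  case (parent z)
  have "z \<in> bV T"
    using rooted_ancestors_subset[OF assms(1,2)] parent.hyps(1) by blast
  then have "depth T (bpar T z) < depth T z"
    using depth_parent_less[OF assms(1)] parent.hyps(2) by blast
  then show ?case
    using parent.IH by (cases "z = y") auto
qed simp

lemma ancestors_antisym:
  assumes "rooted T" "y \<in> bV T" "x \<in> ancestors T y" "y \<in> ancestors T x"
  shows "x = y"
proof (rule ccontr)
  assume ne: "x \<noteq> y"
  have "x \<in> bV T" using rooted_ancestors_subset[OF assms(1,2)] assms(3) by blast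
  have "depth T x < depth T y" by (rule depth_ancestor_less[OF assms(1-3) ne])
  moreover have "depth T y < depth T x"
    using depth_ancestor_less[OF assms(1) \<open>x \<in> bV T\<close> assms(4)] ne by simp
  ultimately show False by simp
qed

lemma child_notin_ancestors_parent:
  assumes "rooted T" "y \<in> bV T" "y \<noteq> broot T"
  shows "y \<notin> ancestors T (bpar T y)"
proof
  assume "y \<in> ancestors T (bpar T y)"
  then have "bpar T y = y"
    using ancestors_antisym[OF assms(1,2) parent_in_ancestors[OF assms(3)]] by simp
  with depth_parent_less[OF assms] show False by simp
qed

lemma is_branch_Nil [simp]: "is_branch T []"
  by (simp add: is_branch_def)

lemma is_branch_singleton [simp]: "is_branch T [x] \<longleftrightarrow> x \<in> bV T"
  by (simp add: is_branch_def)

lemma is_branch_Cons_Cons: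
  "is_branch T (x # y # xs) \<longleftrightarrow> x \<in> bV T \<and> y \<noteq> broot T \<and> bpar T y = x \<and> is_branch T (y # xs)"
  unfolding is_branch_def by (simp add: All_less_Suc2) blast

lemma is_branch_append:
  "is_branch T (xs @ ys) \<longleftrightarrow> is_branch T xs \<and> is_branch T ys \<and>
     (xs \<noteq> [] \<longrightarrow> ys \<noteq> [] \<longrightarrow> hd ys \<noteq> broot T \<and> bpar T (hd ys) = last xs)"
proof (induction xs)
  case (Cons x xs)
  show ?case
  proof (cases xs)
    case Nil
    then show ?thesis by (cases ys) (auto simp: is_branch_Cons_Cons)
  next
    case (Cons x' xs')
    have "is_branch T (x # xs @ ys) \<longleftrightarrow>
        x \<in> bV T \<and> x' \<noteq> broot T \<and> bpar T x' = x \<and> is_branch T (xs @ ys)"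
      "is_branch T (x # xs) \<longleftrightarrow> x \<in> bV T \<and> x' \<noteq> broot T \<and> bpar T x' = x \<and> is_branch T xs"
      using Cons by (simp_all add: is_branch_Cons_Cons)
    then show ?thesis using Cons Cons.IH by auto
  qed
qed simp

lemma branch_hd_ancestor: "is_branch T (x # xs) \<Longrightarrow> y \<in> set (x # xs) \<Longrightarrow> x \<in> ancestors T y"
proof (induction xs arbitrary: x)
  case (Cons x' xs)
  then have "x' \<in> ancestors T y \<or> y = x" "x' \<noteq> broot T" "bpar T x' = x"
    by (auto simp: is_branch_Cons_Cons)
  then show ?case
    by (metis ancestors.self ancestors_trans parent_in_ancestors)
qed (simp add: ancestors.self)

lemma branch_ancestor_append:
  "is_branch T (xs @ ys) \<Longrightarrow> x \<in> set xs \<Longrightarrow> y \<in> set ys \<Longrightarrow> x \<in> ancestors T y"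
proof (induction xs)
  case (Cons x' xs)
  then show ?case
    using branch_hd_ancestor[of T x' "xs @ ys" y] is_branch_append[of T "[x']" "xs @ ys"] by auto
qed simp

lemma is_branch_parent_cong:
  assumes "is_branch T xs" "set xs \<subseteq> bV T'" "broot T' = broot T"
    "\<And>x. x \<in> set (tl xs) \<Longrightarrow> bpar T' x = bpar T x"
  shows "is_branch T' xs"
proof -
  have "xs ! Suc i \<in> set (tl xs)" if "Suc i < length xs" for i
    using that by (cases xs) auto
  then show ?thesis
    using assms unfolding is_branch_def by auto
qed

lemma branch_tl_parent:
  assumes "is_branch T xs" "y \<in> set (tl xs)"
  shows "y \<noteq> broot T" "bpar T y \<in> set xs"
proof -
  obtain i where "Suc i < length xs" "y = xs ! Suc i"
    using assms(2) by (cases xs) (auto simp: in_set_conv_nth)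
  with assms(1) show "y \<noteq> broot T" "bpar T y \<in> set xs"
    unfolding is_branch_def by auto
qed

lemma parent_not_leaf: "z \<in> bV T \<Longrightarrow> z \<noteq> broot T \<Longrightarrow> \<not> is_leaf T (bpar T z)"
  by (auto simp: is_leaf_def children_def)

lemma burling_rooted: "burling_tree T \<Longrightarrow> rooted T"
  by (simp add: burling_tree_def)

lemma burling_last_born_child:
  "burling_tree T \<Longrightarrow> x \<in> bV T \<Longrightarrow> \<not> is_leaf T x \<Longrightarrow> blb T x \<in> children T x"
  by (simp add: burling_tree_def)

lemma burling_last_born_in:
  assumes "burling_tree T" "is_last_born T z"
  shows "z \<in> bV T"
proof -
  obtain x where "x \<in> bV T" "\<not> is_leaf T x" "blb T x = z"
    using assms(2) unfolding is_last_born_def by blast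
  then have "z \<in> children T x" using burling_last_born_child[OF assms(1)] by blast
  then show ?thesis by (simp add: children_def)
qed

lemma burling_bc_empty:
  "burling_tree T \<Longrightarrow> z \<in> bV T \<Longrightarrow> z = broot T \<or> is_last_born T z \<Longrightarrow> bc T z = {}"
  unfolding burling_tree_def by blast

lemma burling_bc_branch:
  assumes "burling_tree T" "z \<in> bV T" "z \<noteq> broot T" "\<not> is_last_born T z"
  obtains xs where "is_branch T xs" "xs \<noteq> [] \<Longrightarrow> hd xs = blb T (bpar T z)" "bc T z = set xs"
proof -
  have "\<exists>xs. is_branch T xs \<and> (xs \<noteq> [] \<longrightarrow> hd xs = blb T (bpar T z)) \<and> bc T z = set xs"
    using assms unfolding burling_tree_def by blast
  then show thesis using that by blast
qed

lemma burling_bc_subset: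
  assumes "burling_tree T" "z \<in> bV T"
  shows "bc T z \<subseteq> bV T"
proof (cases "z = broot T \<or> is_last_born T z")
  case True
  then show ?thesis using burling_bc_empty[OF assms] by simp
next
  case False
  then obtain xs where "is_branch T xs" "bc T z = set xs"
    using burling_bc_branch[OF assms] by metis
  then show ?thesis by (simp add: is_branch_def)
qed

lemma burling_root_notin_bc:
  assumes "burling_tree T" "z \<in> bV T"
  shows "broot T \<notin> bc T z"
proof (cases "z = broot T \<or> is_last_born T z")
  case True
  then show ?thesis using burling_bc_empty[OF assms] by simp
next
  case False
  then obtain xs where xs: "is_branch T xs" "xs \<noteq> [] \<Longrightarrow> hd xs = blb T (bpar T z)" "bc T z = set xs"
    using burling_bc_branch[OF assms] by metis
  have "bpar T z \<in> bV T"
    using False assms(2) rooted_parent_in[OF burling_rooted[OF assms(1)]] by simp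
  moreover have "\<not> is_leaf T (bpar T z)"
    using False assms(2) by (simp add: parent_not_leaf)
  ultimately have "xs \<noteq> [] \<Longrightarrow> hd xs \<in> children T (bpar T z)"
    using xs(2) burling_last_born_child[OF assms(1)] by simp
  then have "xs \<noteq> [] \<Longrightarrow> hd xs \<noteq> broot T"
    by (simp add: children_def)
  with xs(1,3) branch_tl_parent(1)[OF xs(1)] show ?thesis
    by (cases xs) auto
qed

section \<open>Relabelling\<close>

text \<open>This is a relabelling when \<open>\<sigma>\<close> is an involution, the only case considered.\<close>
definition rename :: "('a \<Rightarrow> 'a) \<Rightarrow> 'a btree \<Rightarrow> 'a btree" where
  "rename \<sigma> T = \<lparr>bV = \<sigma> ` bV T, broot = \<sigma> (broot T), bpar = \<sigma> \<circ> bpar T \<circ> \<sigma>,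
     blb = \<sigma> \<circ> blb T \<circ> \<sigma>, bc = (\<lambda>x. \<sigma> ` bc T (\<sigma> x))\<rparr>"

lemma rename_simps [simp]:
  "bV (rename \<sigma> T) = \<sigma> ` bV T" "broot (rename \<sigma> T) = \<sigma> (broot T)"
  "bpar (rename \<sigma> T) x = \<sigma> (bpar T (\<sigma> x))" "blb (rename \<sigma> T) x = \<sigma> (blb T (\<sigma> x))"
  "bc (rename \<sigma> T) x = \<sigma> ` bc T (\<sigma> x)"
  by (simp_all add: rename_def)

context
  fixes \<sigma> :: "'a \<Rightarrow> 'a"
  assumes involutive: "\<And>x. \<sigma> (\<sigma> x) = x"
begin

lemma involutive_eq_iff: "\<sigma> x = y \<longleftrightarrow> x = \<sigma> y"
proof
  assume "\<sigma> x = y"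
  then show "x = \<sigma> y" using involutive[of x] by simp
qed (simp add: involutive)

lemma involutive_image_iff: "x \<in> \<sigma> ` A \<longleftrightarrow> \<sigma> x \<in> A"
proof
  assume "\<sigma> x \<in> A"
  then have "\<sigma> (\<sigma> x) \<in> \<sigma> ` A" by (rule imageI)
  then show "x \<in> \<sigma> ` A" by (simp add: involutive)
qed (auto simp: involutive)

lemma involutive_pair_image_iff: "(x, y) \<in> map_prod \<sigma> \<sigma> ` E \<longleftrightarrow> (\<sigma> x, \<sigma> y) \<in> E"
proof
  assume "(\<sigma> x, \<sigma> y) \<in> E"
  then have "map_prod \<sigma> \<sigma> (\<sigma> x, \<sigma> y) \<in> map_prod \<sigma> \<sigma> ` E" by (rule imageI)
  then show "(x, y) \<in> map_prod \<sigma> \<sigma> ` E" by (simp add: involutive)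
qed (auto simp: involutive)

lemma all_involutive: "(\<forall>z. P (\<sigma> z)) \<longleftrightarrow> (\<forall>z. P z)"
proof
  assume "\<forall>z. P (\<sigma> z)"
  then have "P (\<sigma> (\<sigma> z))" for z by blast
  then show "\<forall>z. P z" by (simp add: involutive)
qed simp

lemma ancestors_rename: "x \<in> ancestors (rename \<sigma> T) y \<longleftrightarrow> \<sigma> x \<in> ancestors T (\<sigma> y)"
proof
  assume "x \<in> ancestors (rename \<sigma> T) y"
  then show "\<sigma> x \<in> ancestors T (\<sigma> y)"
  proof induction
    case (parent z)
    have "\<sigma> z \<noteq> broot T"
      using parent.hyps(2) by (simp add: involutive_eq_iff)
    with parent.IH have "bpar T (\<sigma> z) \<in> ancestors T (\<sigma> y)" by (rule ancestors.parent)
    then show ?case by (simp add: involutive)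
  qed (rule ancestors.self)
next
  assume "\<sigma> x \<in> ancestors T (\<sigma> y)"
  then have "\<sigma> (\<sigma> x) \<in> ancestors (rename \<sigma> T) y"
  proof induction
    case self
    then show ?case by (simp add: involutive ancestors.self)
  next
    case (parent z)
    have "\<sigma> z \<noteq> broot (rename \<sigma> T)"
      using parent.hyps(2) by (simp add: involutive_eq_iff involutive)
    with parent.IH have "bpar (rename \<sigma> T) (\<sigma> z) \<in> ancestors (rename \<sigma> T) y"
      by (rule ancestors.parent)
    then show ?case by (simp add: involutive)
  qed
  then show "x \<in> ancestors (rename \<sigma> T) y" by (simp add: involutive)
qed

lemma anc_rename: "anc (rename \<sigma> T) x y \<longleftrightarrow> anc T (\<sigma> x) (\<sigma> y)"
  by (simp add: anc_iff_ancestors ancestors_rename)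

lemma children_rename: "children (rename \<sigma> T) x = \<sigma> ` children T (\<sigma> x)"
proof -
  have "v \<in> children (rename \<sigma> T) x \<longleftrightarrow> \<sigma> v \<in> children T (\<sigma> x)" for v
    unfolding children_def rename_simps mem_Collect_eq involutive_image_iff
    using involutive_eq_iff[of v "broot T"] involutive_eq_iff[of "bpar T (\<sigma> v)" x] by simp
  then show ?thesis by (simp add: set_eq_iff involutive_image_iff)
qed

lemma is_leaf_rename: "is_leaf (rename \<sigma> T) x \<longleftrightarrow> is_leaf T (\<sigma> x)"
  by (simp add: is_leaf_def children_rename)

lemma is_last_born_rename: "is_last_born (rename \<sigma> T) x \<longleftrightarrow> is_last_born T (\<sigma> x)"
proof
  assume "is_last_born (rename \<sigma> T) x"
  then obtain y where "y \<in> bV (rename \<sigma> T)" "\<not> is_leaf (rename \<sigma> T) y" "blb (rename \<sigma> T) y = x"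
    unfolding is_last_born_def by blast
  then have "\<sigma> y \<in> bV T" "\<not> is_leaf T (\<sigma> y)" "blb T (\<sigma> y) = \<sigma> x"
    by (auto simp: involutive_image_iff is_leaf_rename involutive)
  then show "is_last_born T (\<sigma> x)" unfolding is_last_born_def by blast
next
  assume "is_last_born T (\<sigma> x)"
  then obtain y where "y \<in> bV T" "\<not> is_leaf T y" "blb T y = \<sigma> x"
    unfolding is_last_born_def by blast
  then have "\<sigma> y \<in> bV (rename \<sigma> T)" "\<not> is_leaf (rename \<sigma> T) (\<sigma> y)" "blb (rename \<sigma> T) (\<sigma> y) = x"
    by (auto simp: involutive_image_iff is_leaf_rename involutive)
  then show "is_last_born (rename \<sigma> T) x" unfolding is_last_born_def by blast
qed

lemma is_branch_rename: "is_branch (rename \<sigma> T) xs \<longleftrightarrow> is_branch T (map \<sigma> xs)"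
proof -
  have "set xs \<subseteq> \<sigma> ` bV T \<longleftrightarrow> set (map \<sigma> xs) \<subseteq> bV T"
    unfolding set_map subset_eq involutive_image_iff by blast
  moreover have "(xs ! Suc i \<noteq> \<sigma> (broot T) \<and> \<sigma> (bpar T (\<sigma> (xs ! Suc i))) = xs ! i) \<longleftrightarrow>
      (\<sigma> (xs ! Suc i) \<noteq> broot T \<and> bpar T (\<sigma> (xs ! Suc i)) = \<sigma> (xs ! i))" for i
    by (metis involutive)
  ultimately show ?thesis unfolding is_branch_def rename_simps by auto
qed

lemma rooted_rename:
  assumes rooted: "rooted T"
  shows "rooted (rename \<sigma> T)"
  unfolding rooted_tree_def
proof (intro conjI ballI)
  show "finite (bV (rename \<sigma> T))" "broot (rename \<sigma> T) \<in> bV (rename \<sigma> T)"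
    using rooted by (simp_all add: rooted_tree_def involutive_image_iff involutive)
next
  fix x assume "x \<in> bV (rename \<sigma> T) - {broot (rename \<sigma> T)}"
  then have "\<sigma> x \<in> bV T" "\<sigma> x \<noteq> broot T"
    by (auto simp: involutive_image_iff involutive_eq_iff)
  then show "bpar (rename \<sigma> T) x \<in> bV (rename \<sigma> T)"
    using rooted_parent_in[OF rooted] by (simp add: involutive_image_iff involutive)
next
  fix x assume "x \<in> bV (rename \<sigma> T)"
  then have "broot T \<in> ancestors T (\<sigma> x)"
    by (simp add: involutive_image_iff rooted_root_in_ancestors[OF rooted])
  then have "broot (rename \<sigma> T) \<in> ancestors (rename \<sigma> T) x"
    by (simp add: ancestors_rename involutive)
  then show "\<exists>n. (bpar (rename \<sigma> T) ^^ n) x = broot (rename \<sigma> T)"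
    by (simp only: root_reachable_iff)
qed

lemma burling_tree_rename:
  assumes burling: "burling_tree T"
  shows "burling_tree (rename \<sigma> T)"
  unfolding burling_tree_def
proof (intro conjI ballI impI)
  show "rooted (rename \<sigma> T)" using rooted_rename[OF burling_rooted[OF burling]] .
next
  fix x assume "x \<in> bV (rename \<sigma> T)" "\<not> is_leaf (rename \<sigma> T) x"
  then have "blb T (\<sigma> x) \<in> children T (\<sigma> x)"
    by (simp add: involutive_image_iff is_leaf_rename burling_last_born_child[OF burling])
  then show "blb (rename \<sigma> T) x \<in> children (rename \<sigma> T) x"
    by (simp add: children_rename involutive_image_iff involutive)
next
  fix x assume "x \<in> bV (rename \<sigma> T)" "x \<noteq> broot (rename \<sigma> T) \<and> \<not> is_last_born (rename \<sigma> T) x"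
  then have "\<sigma> x \<in> bV T" "\<sigma> x \<noteq> broot T" "\<not> is_last_born T (\<sigma> x)"
    by (auto simp: involutive_image_iff is_last_born_rename involutive_eq_iff)
  then obtain xs where xs: "is_branch T xs" "xs \<noteq> [] \<Longrightarrow> hd xs = blb T (bpar T (\<sigma> x))"
      "bc T (\<sigma> x) = set xs"
    using burling_bc_branch[OF burling] by metis
  have "is_branch (rename \<sigma> T) (map \<sigma> xs)"
    using xs(1) by (simp add: is_branch_rename comp_def involutive)
  moreover have "map \<sigma> xs \<noteq> [] \<longrightarrow> hd (map \<sigma> xs) = blb (rename \<sigma> T) (bpar (rename \<sigma> T) x)"
    using xs(2) by (auto simp: involutive hd_map)
  moreover have "bc (rename \<sigma> T) x = set (map \<sigma> xs)"
    using xs(3) by simp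
  ultimately show "\<exists>xs. is_branch (rename \<sigma> T) xs
      \<and> (xs \<noteq> [] \<longrightarrow> hd xs = blb (rename \<sigma> T) (bpar (rename \<sigma> T) x))
      \<and> bc (rename \<sigma> T) x = set xs"
    by blast
next
  fix x assume "x \<in> bV (rename \<sigma> T)" "x = broot (rename \<sigma> T) \<or> is_last_born (rename \<sigma> T) x"
  then have "bc T (\<sigma> x) = {}"
    by (intro burling_bc_empty[OF burling])
      (auto simp: involutive_image_iff is_last_born_rename involutive)
  then show "bc (rename \<sigma> T) x = {}" by simp
qed

lemma derived_rename:
  assumes "derived T V E"
  shows "derived (rename \<sigma> T) (\<sigma> ` V) (map_prod \<sigma> \<sigma> ` E)"
  unfolding derived_def
proof (intro conjI ballI)
  show "\<sigma> ` V \<subseteq> bV (rename \<sigma> T)" "map_prod \<sigma> \<sigma> ` E \<subseteq> \<sigma> ` V \<times> \<sigma> ` V"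
    using assms by (auto simp: derived_def)
  fix x y assume "x \<in> \<sigma> ` V" "y \<in> \<sigma> ` V"
  then show "(x, y) \<in> map_prod \<sigma> \<sigma> ` E \<longleftrightarrow> y \<in> bc (rename \<sigma> T) x"
    using assms by (simp add: derived_def involutive_pair_image_iff involutive_image_iff)
qed

lemma top_arc_rename:
  "top_arc (rename \<sigma> T) (map_prod \<sigma> \<sigma> ` E) x y \<longleftrightarrow> top_arc T E (\<sigma> x) (\<sigma> y)"
  unfolding top_arc_def involutive_pair_image_iff anc_rename
  using all_involutive[of "\<lambda>z. (\<sigma> x, z) \<in> E \<longrightarrow> anc T (\<sigma> y) z"] by simp

lemma bottom_arc_rename:
  "bottom_arc (rename \<sigma> T) (map_prod \<sigma> \<sigma> ` E) x y \<longleftrightarrow> bottom_arc T E (\<sigma> x) (\<sigma> y)"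
  unfolding bottom_arc_def involutive_pair_image_iff anc_rename
  using all_involutive[of "\<lambda>z. (\<sigma> x, z) \<in> E \<longrightarrow> anc T z (\<sigma> y)"] by simp

end

lemma burling_tree_avoiding_vertex:
  fixes T :: "'a btree"
  assumes "infinite (UNIV :: 'a set)" "burling_tree T" "derived T V E" "w \<notin> V"
  obtains T0 where "burling_tree T0" "derived T0 V E" "w \<notin> bV T0"
    "\<And>x y. top_arc T0 E x y \<longleftrightarrow> top_arc T E x y"
    "\<And>x y. bottom_arc T0 E x y \<longleftrightarrow> bottom_arc T E x y"
proof -
  have "finite (insert w (bV T))"
    using assms(2) by (simp add: burling_tree_def rooted_tree_def)
  from ex_new_if_finite[OF assms(1) this] obtain w0 where w0: "w0 \<notin> insert w (bV T)" ..
  define \<sigma> where "\<sigma> = id(w := w0, w0 := w)"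
  have involutive: "\<sigma> (\<sigma> x) = x" for x
    using w0 by (simp add: \<sigma>_def)
  have V_in: "V \<subseteq> bV T" and E_in: "E \<subseteq> V \<times> V"
    using assms(3) by (simp_all add: derived_def)
  have V_fixed: "\<sigma> x = x" if "x \<in> V" for x
    using that w0 assms(4) V_in unfolding \<sigma>_def by auto
  have "\<sigma> ` V = V"
    using V_fixed by simp
  have E_fixed: "map_prod \<sigma> \<sigma> ` E = E"
  proof -
    have "map_prod \<sigma> \<sigma> p = p" if "p \<in> E" for p
      using that E_in V_fixed by (cases p) auto
    then show ?thesis by simp
  qed
  have arc_iff: "(\<sigma> x, \<sigma> y) \<in> E \<longleftrightarrow> (x, y) \<in> E" for x y
    using involutive_pair_image_iff[of \<sigma>, OF involutive, of x y E] E_fixed by simp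
  have fixed_if_arc: "\<sigma> x = x" "\<sigma> y = y" if "(x, y) \<in> E" for x y
    using that E_in V_fixed by auto
  show thesis
  proof
    show "burling_tree (rename \<sigma> T)"
      by (rule burling_tree_rename[of \<sigma>, OF involutive assms(2)])
    show "derived (rename \<sigma> T) V E"
      using derived_rename[of \<sigma>, OF involutive assms(3)] \<open>\<sigma> ` V = V\<close> E_fixed by simp
    show "w \<notin> bV (rename \<sigma> T)"
      using w0 involutive_image_iff[of \<sigma>, OF involutive, of w "bV T"] by (simp add: \<sigma>_def)
    show "top_arc (rename \<sigma> T) E x y \<longleftrightarrow> top_arc T E x y" for x y
      using top_arc_rename[of \<sigma>, OF involutive, of T E x y] E_fixed arc_iff[of x y] fixed_if_arc[of x y]
      by (cases "(x, y) \<in> E") (simp_all add: top_arc_def)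
    show "bottom_arc (rename \<sigma> T) E x y \<longleftrightarrow> bottom_arc T E x y" for x y
      using bottom_arc_rename[of \<sigma>, OF involutive, of T E x y] E_fixed arc_iff[of x y] fixed_if_arc[of x y]
      by (cases "(x, y) \<in> E") (simp_all add: bottom_arc_def)
  qed
qed

section \<open>Inserting a parent above siblings\<close>

text \<open>Every branch entering M now passes through a, except the c-sets of the members
  of M, which start at the last-born of a.\<close>
definition insert_parent :: "'a btree \<Rightarrow> 'a \<Rightarrow> 'a set \<Rightarrow> 'a \<Rightarrow> 'a btree" where
  "insert_parent T q M a = \<lparr>bV = insert a (bV T), broot = broot T,
     bpar = (\<lambda>z. if z \<in> M then a else if z = a then q else bpar T z),
     blb = (\<lambda>z. if z = q then a else if z = a then blb T q else blb T z),
     bc = (\<lambda>z. if z = a then {} else if z \<notin> M \<and> bc T z \<inter> M \<noteq> {} then insert a (bc T z) else bc T z)\<rparr>"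

lemma insert_parent_simps:
  "bV (insert_parent T q M a) = insert a (bV T)"
  "broot (insert_parent T q M a) = broot T"
  "bpar (insert_parent T q M a) z = (if z \<in> M then a else if z = a then q else bpar T z)"
  "blb (insert_parent T q M a) z = (if z = q then a else if z = a then blb T q else blb T z)"
  "bc (insert_parent T q M a) z =
     (if z = a then {} else if z \<notin> M \<and> bc T z \<inter> M \<noteq> {} then insert a (bc T z) else bc T z)"
  by (simp_all add: insert_parent_def)

definition insert_before :: "'a set \<Rightarrow> 'a \<Rightarrow> 'a list \<Rightarrow> 'a list" where
  "insert_before M a xs = concat (map (\<lambda>y. if y \<in> M then [a, y] else [y]) xs)"

lemma insert_before_simps [simp]:
  "insert_before M a [] = []"
  "insert_before M a (y # ys) = (if y \<in> M then [a, y] else [y]) @ insert_before M a ys"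
  "insert_before M a (xs @ ys) = insert_before M a xs @ insert_before M a ys"
  by (simp_all add: insert_before_def)

lemma set_insert_before:
  "set (insert_before M a xs) = set xs \<union> (if set xs \<inter> M = {} then {} else {a})"
  by (induction xs) auto

lemma hd_insert_before:
  "xs \<noteq> [] \<Longrightarrow> hd (insert_before M a xs) = (if hd xs \<in> M then a else hd xs)"
  by (cases xs) auto

lemma insert_before_eq_Nil_iff [simp]: "insert_before M a xs = [] \<longleftrightarrow> xs = []"
  by (cases xs) auto

locale parent_insertion =
  fixes T :: "'a btree" and q :: 'a and M :: "'a set" and a :: 'a
  assumes burling: "burling_tree T" and q_in: "q \<in> bV T" and M_children: "M \<subseteq> children T q"
    and last_born_in_M: "blb T q \<in> M" and a_fresh: "a \<notin> bV T"
begin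

abbreviation T' :: "'a btree" where
  "T' \<equiv> insert_parent T q M a"

lemma rooted: "rooted T"
  using burling by (rule burling_rooted)

lemma M_child: "m \<in> M \<Longrightarrow> m \<in> bV T \<and> m \<noteq> broot T \<and> bpar T m = q"
  using M_children by (auto simp: children_def)

lemma a_notin_M: "a \<notin> M"
  using M_child a_fresh by blast

lemma q_notin_M: "q \<notin> M"
proof
  assume "q \<in> M"
  then have "q \<noteq> broot T" "bpar T q = q" using M_child by auto
  with depth_parent_less[OF rooted q_in] show False by simp
qed

lemma a_neq_q: "a \<noteq> q"
  using a_fresh q_in by blast

lemma a_neq_root: "a \<noteq> broot T"
  using a_fresh rooted by (auto simp: rooted_tree_def)

lemma ancestors_subset_insert_parent:
  assumes y_in: "y \<in> bV T"
  shows "ancestors T y \<subseteq> ancestors T' y"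
proof
  fix z assume "z \<in> ancestors T y"
  then show "z \<in> ancestors T' y"
  proof induction
    case (parent z)
    have z_in: "z \<in> bV T"
      using rooted_ancestors_subset[OF rooted y_in] parent.hyps(1) by blast
    have z_not_root: "z \<noteq> broot T'" using parent.hyps(2) by (simp add: insert_parent_simps)
    have up: "bpar T' z \<in> ancestors T' y"
      using parent.IH z_not_root by (rule ancestors.parent)
    show ?case
    proof (cases "z \<in> M")
      case True
      then have "a \<in> ancestors T' y" using up by (simp add: insert_parent_simps)
      moreover have "a \<noteq> broot T'" using a_neq_root by (simp add: insert_parent_simps)
      ultimately have "bpar T' a \<in> ancestors T' y" by (rule ancestors.parent)
      then show ?thesis using True M_child[OF True] a_notin_M by (simp add: insert_parent_simps)
    next
      case False
      then have "bpar T' z = bpar T z" using z_in a_fresh by (auto simp: insert_parent_simps)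
      then show ?thesis using up by simp
    qed
  qed (rule ancestors.self)
qed

lemma ancestors_insert_parent:
  assumes y_in: "y \<in> bV T"
  shows "x \<in> ancestors T' y \<longleftrightarrow> x \<in> ancestors T y \<or> (x = a \<and> (\<exists>m\<in>M. m \<in> ancestors T y))"
proof
  assume "x \<in> ancestors T' y"
  then show "x \<in> ancestors T y \<or> (x = a \<and> (\<exists>m\<in>M. m \<in> ancestors T y))"
  proof induction
    case (parent z)
    have z_not_root: "z \<noteq> broot T" using parent.hyps(2) by (simp add: insert_parent_simps)
    from parent.IH show ?case
    proof
      assume z: "z \<in> ancestors T y"
      show ?case
      proof (cases "z \<in> M")
        case False
        have "z \<noteq> a"
          using rooted_ancestors_subset[OF rooted y_in] z a_fresh by blast
        then have "bpar T' z = bpar T z" using False by (simp add: insert_parent_simps)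
        then show ?thesis using ancestors.parent[OF z z_not_root] by simp
      qed (use z in \<open>auto simp: insert_parent_simps\<close>)
    next
      assume "z = a \<and> (\<exists>m\<in>M. m \<in> ancestors T y)"
      then obtain m where m: "z = a" "m \<in> M" "m \<in> ancestors T y" by blast
      have "bpar T' z = bpar T m" "m \<noteq> broot T"
        using m a_notin_M M_child[OF m(2)] by (simp_all add: insert_parent_simps)
      then show ?thesis using ancestors.parent[OF m(3)] by simp
    qed
  qed (simp add: ancestors.self)
next
  note old = ancestors_subset_insert_parent[OF y_in]
  assume "x \<in> ancestors T y \<or> (x = a \<and> (\<exists>m\<in>M. m \<in> ancestors T y))"
  then show "x \<in> ancestors T' y"
  proof
    assume "x = a \<and> (\<exists>m\<in>M. m \<in> ancestors T y)"
    then obtain m where m: "x = a" "m \<in> M" "m \<in> ancestors T y" by blast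
    have "m \<noteq> broot T'" using M_child[OF m(2)] by (simp add: insert_parent_simps)
    then have "bpar T' m \<in> ancestors T' y" using old m(3) by (intro ancestors.parent) blast
    then show ?thesis using m by (simp add: insert_parent_simps)
  qed (use old in blast)
qed

lemma anc_insert_parent: "x \<in> bV T \<Longrightarrow> y \<in> bV T \<Longrightarrow> anc T' x y \<longleftrightarrow> anc T x y"
  using ancestors_insert_parent a_fresh by (auto simp: anc_iff_ancestors)

lemma ancestors_insert_parent_new: "ancestors T' a = insert a (ancestors T' q)"
proof -
  have "a \<noteq> broot T'" using a_neq_root by (simp add: insert_parent_simps)
  then have "ancestors T' a = insert a (ancestors T' (bpar T' a))" by (rule ancestors_step)
  then show ?thesis using a_notin_M by (simp add: insert_parent_simps)
qed

lemma children_insert_parent: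
  assumes "x \<in> bV T'"
  shows "children T' x =
    (if x = q then insert a (children T q - M) else if x = a then M else children T x)"
proof -
  have "bpar T v \<noteq> a" if "v \<in> bV T" "v \<noteq> broot T" for v
    using that rooted_parent_in[OF rooted] a_fresh by auto
  then show ?thesis
    unfolding children_def insert_parent_simps using a_neq_root a_neq_q M_child a_notin_M a_fresh
    by auto
qed

lemma is_leaf_insert_parent:
  assumes "x \<in> bV T'"
  shows "is_leaf T' x \<longleftrightarrow> x \<noteq> q \<and> x \<noteq> a \<and> is_leaf T x"
  using children_insert_parent[OF assms] last_born_in_M unfolding is_leaf_def by auto

lemma is_last_born_insert_parent: "is_last_born T' z \<longleftrightarrow> z = a \<or> is_last_born T z"
proof
  have q_not_leaf: "\<not> is_leaf T q"
    using last_born_in_M M_children by (auto simp: is_leaf_def)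
  assume "is_last_born T' z"
  then obtain x where x: "x \<in> bV T'" "\<not> is_leaf T' x" "blb T' x = z"
    unfolding is_last_born_def by blast
  consider "x = q" | "x = a" | "x \<noteq> q" "x \<noteq> a" by blast
  then show "z = a \<or> is_last_born T z"
  proof cases
    case 2
    then have "z = blb T q" using x a_neq_q by (simp add: insert_parent_simps)
    then show ?thesis using q_in q_not_leaf unfolding is_last_born_def by blast
  next
    case 3
    then have "x \<in> bV T" "\<not> is_leaf T x" "blb T x = z"
      using x is_leaf_insert_parent[OF x(1)] by (simp_all add: insert_parent_simps)
    then show ?thesis unfolding is_last_born_def by blast
  qed (use x in \<open>simp add: insert_parent_simps\<close>)
next
  have nonleaf: "\<not> is_leaf T' q" "\<not> is_leaf T' a"
    using is_leaf_insert_parent[of q] is_leaf_insert_parent[of a] q_in by (simp_all add: insert_parent_simps)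
  assume "z = a \<or> is_last_born T z"
  then show "is_last_born T' z"
  proof
    assume "z = a"
    then show ?thesis
      using q_in nonleaf(1) unfolding is_last_born_def by (auto simp: insert_parent_simps)
  next
    assume "is_last_born T z"
    then obtain x where x: "x \<in> bV T" "\<not> is_leaf T x" "blb T x = z"
      unfolding is_last_born_def by blast
    show ?thesis
    proof (cases "x = q")
      case True
      then show ?thesis
        using x nonleaf(2) a_neq_q unfolding is_last_born_def by (auto simp: insert_parent_simps)
    next
      case False
      moreover have "x \<noteq> a" using x a_fresh by auto
      ultimately show ?thesis
        using x is_leaf_insert_parent[of x] unfolding is_last_born_def by (auto simp: insert_parent_simps)
    qed
  qed
qed

lemma is_branch_insert_before:
  assumes "is_branch T xs"
  shows "is_branch T' (insert_before M a xs)"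
  using assms
proof (induction xs)
  case (Cons x xs)
  have x_in: "x \<in> bV T" and branch_xs: "is_branch T xs"
    and link: "xs \<noteq> [] \<Longrightarrow> hd xs \<noteq> broot T \<and> bpar T (hd xs) = x"
    using Cons.prems is_branch_append[of T "[x]" xs] by auto
  have head: "is_branch T' (if x \<in> M then [a, x] else [x])"
    using x_in M_child by (simp add: is_branch_Cons_Cons insert_parent_simps)
  have link': "hd (insert_before M a xs) \<noteq> broot T' \<and>
      bpar T' (hd (insert_before M a xs)) = last (if x \<in> M then [a, x] else [x])"
    if "insert_before M a xs \<noteq> []"
  proof -
    have xs: "xs \<noteq> []" using that by simp
    show ?thesis
    proof (cases "hd xs \<in> M")
      case True
      then have "x = q" using link[OF xs] M_child by simp
      then show ?thesis
        using True hd_insert_before[OF xs] a_neq_root a_notin_M q_notin_M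
        by (simp add: insert_parent_simps)
    next
      case False
      have "hd xs \<in> bV T" using branch_xs xs hd_in_set by (auto simp: is_branch_def)
      then have "hd xs \<noteq> a" using a_fresh by auto
      then show ?thesis
        using False hd_insert_before[OF xs] link[OF xs] by (simp add: insert_parent_simps)
    qed
  qed
  show ?case
    using is_branch_append[of T' "if x \<in> M then [a, x] else [x]" "insert_before M a xs"]
      head Cons.IH[OF branch_xs] link' by simp
qed simp

lemma bc_insert_parent_outside:
  assumes v_in: "v \<in> bV T" and v_not_root: "v \<noteq> broot T" and v_notin: "v \<notin> M"
    and branch: "is_branch T xs" and hd: "xs \<noteq> [] \<Longrightarrow> hd xs = blb T (bpar T v)"
    and bc: "bc T v = set xs"
  shows "is_branch T' (insert_before M a xs)"
    "insert_before M a xs \<noteq> [] \<Longrightarrow> hd (insert_before M a xs) = blb T' (bpar T' v)"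
    "bc T' v = set (insert_before M a xs)"
proof -
  show "is_branch T' (insert_before M a xs)"
    using branch by (rule is_branch_insert_before)
  have v_ne_a: "v \<noteq> a" using v_in a_fresh by auto
  show "bc T' v = set (insert_before M a xs)"
    using v_ne_a v_notin bc by (simp add: insert_parent_simps set_insert_before Int_commute)
  assume "insert_before M a xs \<noteq> []"
  then have xs: "xs \<noteq> []" by simp
  have parent_v: "bpar T' v = bpar T v" using v_ne_a v_notin by (simp add: insert_parent_simps)
  have parent_in: "bpar T v \<in> bV T" using rooted_parent_in[OF rooted v_in v_not_root] .
  have "blb T (bpar T v) \<in> children T (bpar T v)"
    using burling_last_born_child[OF burling parent_in] parent_not_leaf[OF v_in v_not_root] by blast
  then have "bpar T (hd xs) = bpar T v"
    using hd[OF xs] by (simp add: children_def)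
  show "hd (insert_before M a xs) = blb T' (bpar T' v)"
  proof (cases "hd xs \<in> M")
    case True
    then have "bpar T v = q" using M_child \<open>bpar T (hd xs) = bpar T v\<close> by simp
    then show ?thesis using True hd_insert_before[OF xs] parent_v by (simp add: insert_parent_simps)
  next
    case False
    then have "bpar T v \<noteq> q" using hd[OF xs] last_born_in_M by auto
    moreover have "bpar T v \<noteq> a" using parent_in a_fresh by auto
    ultimately show ?thesis
      using False hd_insert_before[OF xs] hd[OF xs] parent_v by (simp add: insert_parent_simps)
  qed
qed

lemma bc_insert_parent_inside:
  assumes v_in: "v \<in> M"
    and branch: "is_branch T xs" and hd: "xs \<noteq> [] \<Longrightarrow> hd xs = blb T (bpar T v)"
    and bc: "bc T v = set xs"
  shows "is_branch T' xs" "xs \<noteq> [] \<Longrightarrow> hd xs = blb T' (bpar T' v)" "bc T' v = set xs"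
proof -
  show "bc T' v = set xs" using v_in a_notin_M bc by (auto simp: insert_parent_simps)
  show "hd xs = blb T' (bpar T' v)" if "xs \<noteq> []"
    using that hd v_in M_child[OF v_in] a_neq_q by (simp add: insert_parent_simps)
  have tl_notin_M: "x \<notin> M" if x: "x \<in> set (tl xs)" for x
  proof
    assume "x \<in> M"
    then have q_in_xs: "q \<in> set xs" using branch_tl_parent(2)[OF branch x] M_child by auto
    have "xs \<noteq> []" using x by auto
    moreover from this have "hd xs = blb T q" using hd v_in M_child by auto
    ultimately have xs: "xs = blb T q # tl xs" by (metis list.collapse)
    have "blb T q \<in> ancestors T q"
      using branch_hd_ancestor[of T "blb T q" "tl xs" q] branch q_in_xs by (simp only: xs[symmetric])
    then have "blb T q \<in> ancestors T (bpar T (blb T q))"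
      using M_child[OF last_born_in_M] by simp
    then show False
      using child_notin_ancestors_parent[OF rooted] M_child[OF last_born_in_M] by blast
  qed
  show "is_branch T' xs"
  proof (rule is_branch_parent_cong[OF branch])
    show "set xs \<subseteq> bV T'" using branch by (auto simp: is_branch_def insert_parent_simps)
    show "bpar T' x = bpar T x" if x: "x \<in> set (tl xs)" for x
    proof -
      have "x \<in> set xs" using x by (cases xs) auto
      then have "x \<in> bV T" using branch by (auto simp: is_branch_def)
      then have "x \<noteq> a" using a_fresh by auto
      then show ?thesis using tl_notin_M[OF x] by (simp add: insert_parent_simps)
    qed
  qed (simp add: insert_parent_simps)
qed

lemma rooted_insert_parent: "rooted T'"
  unfolding rooted_tree_def
proof (intro conjI ballI)
  show "finite (bV T')" "broot T' \<in> bV T'"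
    using rooted by (simp_all add: rooted_tree_def insert_parent_simps)
  show "bpar T' v \<in> bV T'" if "v \<in> bV T' - {broot T'}" for v
    using that q_in rooted_parent_in[OF rooted, of v] by (auto simp: insert_parent_simps)
  fix v assume v: "v \<in> bV T'"
  have "broot T \<in> ancestors T' v"
  proof (cases "v = a")
    case True
    then show ?thesis
      using ancestors_insert_parent_new ancestors_insert_parent[OF q_in]
        rooted_root_in_ancestors[OF rooted q_in] by simp
  next
    case False
    then have "v \<in> bV T" using v by (simp add: insert_parent_simps)
    then show ?thesis
      using ancestors_insert_parent rooted_root_in_ancestors[OF rooted] by blast
  qed
  then have "broot T' \<in> ancestors T' v" by (simp add: insert_parent_simps)
  then show "\<exists>n. (bpar T' ^^ n) v = broot T'" by (simp only: root_reachable_iff)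
qed

lemma last_born_child_insert_parent:
  assumes x: "x \<in> bV T'" and not_leaf: "\<not> is_leaf T' x"
  shows "blb T' x \<in> children T' x"
proof -
  consider "x = q" | "x = a" | "x \<in> bV T" "x \<noteq> q" "x \<noteq> a"
    using x by (auto simp: insert_parent_simps)
  then show ?thesis
  proof cases
    case 3
    then have "blb T x \<in> children T x"
      using burling_last_born_child[OF burling] not_leaf is_leaf_insert_parent[OF x] by simp
    then show ?thesis using children_insert_parent[OF x] 3 by (simp add: insert_parent_simps)
  qed (use children_insert_parent[OF x] a_neq_q last_born_in_M in \<open>simp_all add: insert_parent_simps\<close>)
qed

lemma bc_insert_parent_branch:
  assumes v: "v \<in> bV T'" "v \<noteq> broot T'" "\<not> is_last_born T' v"
  shows "\<exists>xs. is_branch T' xs \<and> (xs \<noteq> [] \<longrightarrow> hd xs = blb T' (bpar T' v)) \<and> bc T' v = set xs"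
proof -
  have "v \<noteq> a" using v is_last_born_insert_parent by simp
  then have "v \<in> bV T" "v \<noteq> broot T" "\<not> is_last_born T v"
    using v is_last_born_insert_parent by (simp_all add: insert_parent_simps)
  then obtain xs where xs: "is_branch T xs" "xs \<noteq> [] \<Longrightarrow> hd xs = blb T (bpar T v)" "bc T v = set xs"
    using burling_bc_branch[OF burling] by metis
  show ?thesis
  proof (cases "v \<in> M")
    case True
    show ?thesis using bc_insert_parent_inside[OF True xs] by blast
  next
    case False
    show ?thesis
      using bc_insert_parent_outside[OF \<open>v \<in> bV T\<close> \<open>v \<noteq> broot T\<close> False xs] by blast
  qed
qed

lemma bc_insert_parent_empty:
  assumes v: "v \<in> bV T'" "v = broot T' \<or> is_last_born T' v"
  shows "bc T' v = {}"
proof (cases "v = a")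
  case False
  then have "v \<in> bV T" "v = broot T \<or> is_last_born T v"
    using v is_last_born_insert_parent by (auto simp: insert_parent_simps)
  then show ?thesis
    using False burling_bc_empty[OF burling] by (simp add: insert_parent_simps)
qed (simp add: insert_parent_simps)

lemma burling_tree_insert_parent: "burling_tree T'"
  unfolding burling_tree_def
  using rooted_insert_parent last_born_child_insert_parent bc_insert_parent_branch
    bc_insert_parent_empty
  by blast

lemma derived_insert_parent:
  assumes "derived T V E"
  shows "derived T' V E"
proof -
  have "a \<notin> V" using assms a_fresh by (auto simp: derived_def)
  then show ?thesis
    using assms unfolding derived_def by (auto simp: insert_parent_simps)
qed

lemma top_arc_insert_parent:
  assumes "derived T V E"
  shows "top_arc T' E x y \<longleftrightarrow> top_arc T E x y"
proof -
  have "anc T' y z \<longleftrightarrow> anc T y z" if "(x, z) \<in> E" "(x, y) \<in> E" for z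
    using that assms anc_insert_parent by (auto simp: derived_def)
  then show ?thesis unfolding top_arc_def by blast
qed

lemma bottom_arc_insert_parent:
  assumes "derived T V E"
  shows "bottom_arc T' E x y \<longleftrightarrow> bottom_arc T E x y"
proof -
  have "anc T' z y \<longleftrightarrow> anc T z y" if "(x, z) \<in> E" "(x, y) \<in> E" for z
    using that assms anc_insert_parent by (auto simp: derived_def)
  then show ?thesis unfolding bottom_arc_def by blast
qed

lemma parent_insertion_below:
  assumes "a' \<notin> bV T'"
  shows "parent_insertion T' a M a'"
proof
  show "burling_tree T'" by (rule burling_tree_insert_parent)
  show "a \<in> bV T'" by (simp add: insert_parent_simps)
  show "M \<subseteq> children T' a" using children_insert_parent[of a] a_neq_q by (simp add: insert_parent_simps)
  show "blb T' a \<in> M" using a_neq_q last_born_in_M by (simp add: insert_parent_simps)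
qed (rule assms)

end

section \<open>Attaching the subdividing leaf\<close>

definition subdivision_tree :: "'a btree \<Rightarrow> 'a \<Rightarrow> 'a \<Rightarrow> 'a \<Rightarrow> 'a \<Rightarrow> 'a \<Rightarrow> 'a list \<Rightarrow> 'a btree" where
  "subdivision_tree T u v w s a ys = \<lparr>bV = insert w (bV T), broot = broot T,
     bpar = (bpar T)(w := s), blb = blb T, bc = (bc T)(w := {a, v}, u := set (ys @ [s, w]))\<rparr>"

lemma subdivision_tree_simps:
  "bV (subdivision_tree T u v w s a ys) = insert w (bV T)"
  "broot (subdivision_tree T u v w s a ys) = broot T"
  "bpar (subdivision_tree T u v w s a ys) z = (if z = w then s else bpar T z)"
  "blb (subdivision_tree T u v w s a ys) z = blb T z"
  "bc (subdivision_tree T u v w s a ys) z =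
     (if z = u then set (ys @ [s, w]) else if z = w then {a, v} else bc T z)"
  by (auto simp: subdivision_tree_def)

lemma subdiv_arcs_iff:
  "(x, y) \<in> subdiv_arcs E u v w \<longleftrightarrow>
     ((x, y) \<in> E \<and> (x, y) \<noteq> (u, v)) \<or> (x = u \<and> y = w) \<or> (x = w \<and> y = v)"
  by (auto simp: subdiv_arcs_def)

locale subdivision =
  fixes T :: "'a btree" and V :: "'a set" and E :: "('a \<times> 'a) set"
    and u v w s a :: 'a and ys zs :: "'a list"
  assumes burling: "burling_tree T" and derived: "derived T V E"
    and bottom: "bottom_arc T E u v"
    and branch: "is_branch T (ys @ [s, a, v] @ zs)"
    and hd_branch: "hd (ys @ [s, a, v] @ zs) = blb T (bpar T u)"
    and bc_u: "bc T u = set (ys @ [s, a, v] @ zs)"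
    and last_born_s: "blb T s = a" and a_notin_V: "a \<notin> V" and w_fresh: "w \<notin> bV T"
begin

abbreviation T' :: "'a btree" where
  "T' \<equiv> subdivision_tree T u v w s a ys"

abbreviation E' :: "('a \<times> 'a) set" where
  "E' \<equiv> subdiv_arcs E u v w"

lemma rooted: "rooted T"
  using burling by (rule burling_rooted)

lemma w_ne_root: "w \<noteq> broot T"
  using w_fresh rooted by (auto simp: rooted_tree_def)

lemma V_in: "V \<subseteq> bV T" and E_in: "E \<subseteq> V \<times> V"
  using derived by (simp_all add: derived_def)

lemma arc_iff: "x \<in> V \<Longrightarrow> y \<in> V \<Longrightarrow> (x, y) \<in> E \<longleftrightarrow> y \<in> bc T x"
  using derived by (simp add: derived_def)

lemma uv_arc: "(u, v) \<in> E"
  using bottom by (simp add: bottom_arc_def)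

lemma u_in: "u \<in> V" and v_in: "v \<in> V"
  using uv_arc E_in by auto

lemma u_ne_w: "u \<noteq> w" and v_ne_w: "v \<noteq> w"
  using u_in v_in V_in w_fresh by auto

lemma branch_parts:
  "is_branch T (ys @ [s])" "s \<in> bV T" "a \<in> bV T" "a \<noteq> broot T" "bpar T a = s"
  "v \<noteq> broot T" "bpar T v = a" "is_branch T (v # zs)"
proof -
  show "is_branch T (ys @ [s])"
    using branch is_branch_append[of T "ys @ [s]" "a # v # zs"] by simp
  have "is_branch T (s # a # v # zs)"
    using branch is_branch_append[of T ys "s # a # v # zs"] by simp
  then show "s \<in> bV T" "a \<in> bV T" "a \<noteq> broot T" "bpar T a = s" "v \<noteq> broot T" "bpar T v = a"
    "is_branch T (v # zs)"
    by (simp_all add: is_branch_Cons_Cons)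
qed

lemma above_s_ancestors: "y \<in> set (ys @ [s]) \<Longrightarrow> y \<in> ancestors T s"
  using branch_ancestor_append[of T ys "[s]" y s] branch_parts(1) ancestors.self by auto

lemma v_notin_above_s: "v \<notin> set (ys @ [s])"
proof
  assume "v \<in> set (ys @ [s])"
  then have "v \<in> ancestors T s" by (rule above_s_ancestors)
  then have "a \<in> ancestors T (bpar T a)"
    using ancestors_trans[OF parent_in_ancestors[OF branch_parts(6)]] branch_parts(5,7) by simp
  with child_notin_ancestors_parent[OF rooted branch_parts(3,4)] show False by simp
qed

text \<open>This is where \<open>uv\<close> being a bottom arc is used.\<close>
lemma out_neighbour_ne_v_iff:
  assumes "y \<in> V"
  shows "(y \<in> bc T u \<and> y \<noteq> v) \<longleftrightarrow> y \<in> set (ys @ [s])"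
proof
  assume "y \<in> set (ys @ [s])"
  then show "y \<in> bc T u \<and> y \<noteq> v" using v_notin_above_s bc_u by auto
next
  assume y: "y \<in> bc T u \<and> y \<noteq> v"
  have "y \<notin> set zs"
  proof
    assume "y \<in> set zs"
    then have "v \<in> ancestors T y" using branch_hd_ancestor[OF branch_parts(8)] by simp
    moreover have "y \<in> ancestors T v"
      using bottom arc_iff[OF u_in assms] y by (simp add: bottom_arc_def anc_iff_ancestors)
    ultimately show False using ancestors_antisym[OF rooted] V_in v_in y by blast
  qed
  then show "y \<in> set (ys @ [s])" using y bc_u assms a_notin_V by auto
qed

lemma ancestors_subdivision_tree: "y \<in> bV T \<Longrightarrow> ancestors T' y = ancestors T y"
proof -
  assume y: "y \<in> bV T"
  have "z \<in> bV T" if "z \<in> ancestors T y" for z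
    using that rooted_ancestors_subset[OF rooted y] by blast
  then have "z \<noteq> w" if "z \<in> ancestors T y" for z
    using that w_fresh by blast
  have "x \<in> ancestors T' y \<longleftrightarrow> x \<in> ancestors T y" for x
  proof
    assume "x \<in> ancestors T' y"
    then show "x \<in> ancestors T y"
    proof induction
      case (parent z)
      then show ?case
        using \<open>\<And>z. z \<in> ancestors T y \<Longrightarrow> z \<noteq> w\<close>[OF parent.IH] ancestors.parent[OF parent.IH]
        by (simp add: subdivision_tree_simps)
    qed (rule ancestors.self)
  next
    assume "x \<in> ancestors T y"
    then show "x \<in> ancestors T' y"
    proof induction
      case (parent z)
      then show ?case
        using \<open>\<And>z. z \<in> ancestors T y \<Longrightarrow> z \<noteq> w\<close>[OF parent.hyps(1)] ancestors.parent[OF parent.IH]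
        by (simp add: subdivision_tree_simps)
    qed (rule ancestors.self)
  qed
  then show ?thesis by blast
qed

lemma ancestors_subdivision_tree_w: "ancestors T' w = insert w (ancestors T s)"
proof -
  have "w \<noteq> broot T'" using w_ne_root by (simp add: subdivision_tree_simps)
  then have "ancestors T' w = insert w (ancestors T' (bpar T' w))" by (rule ancestors_step)
  then show ?thesis
    using ancestors_subdivision_tree[OF branch_parts(2)] by (simp add: subdivision_tree_simps)
qed

lemma anc_subdivision_tree: "y \<in> bV T \<Longrightarrow> anc T' x y \<longleftrightarrow> anc T x y"
  using ancestors_subdivision_tree by (simp add: anc_iff_ancestors)

lemma anc_subdivision_tree_w: "anc T' x w \<longleftrightarrow> x = w \<or> x \<in> ancestors T s"
  using ancestors_subdivision_tree_w by (simp add: anc_iff_ancestors)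

lemma children_subdivision_tree:
  "x \<in> bV T \<Longrightarrow> children T' x = (if x = s then insert w (children T x) else children T x)"
  unfolding children_def subdivision_tree_simps using w_ne_root w_fresh by auto

lemma children_subdivision_tree_w: "children T' w = {}"
proof -
  have "bpar T z \<noteq> w" if "z \<in> bV T" "z \<noteq> broot T" for z
    using that rooted_parent_in[OF rooted] w_fresh by auto
  moreover have "s \<noteq> w" using branch_parts(2) w_fresh by auto
  ultimately show ?thesis unfolding children_def subdivision_tree_simps by auto
qed

lemma is_leaf_subdivision_tree: "x \<in> bV T \<Longrightarrow> is_leaf T' x \<longleftrightarrow> is_leaf T x"
proof -
  have "a \<in> children T s" using branch_parts(3-5) by (simp add: children_def)
  then show "x \<in> bV T \<Longrightarrow> ?thesis"
    using children_subdivision_tree unfolding is_leaf_def by auto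
qed

lemma is_leaf_subdivision_tree_w: "is_leaf T' w"
  using children_subdivision_tree_w by (simp add: is_leaf_def)

lemma is_last_born_subdivision_tree: "is_last_born T' z \<longleftrightarrow> is_last_born T z"
proof
  assume "is_last_born T' z"
  then obtain x where x: "x \<in> bV T'" "\<not> is_leaf T' x" "blb T' x = z"
    unfolding is_last_born_def by blast
  then have "x \<in> bV T" using is_leaf_subdivision_tree_w by (auto simp: subdivision_tree_simps)
  then show "is_last_born T z"
    using x is_leaf_subdivision_tree unfolding is_last_born_def by (auto simp: subdivision_tree_simps)
next
  assume "is_last_born T z"
  then show "is_last_born T' z"
    using is_leaf_subdivision_tree unfolding is_last_born_def by (auto simp: subdivision_tree_simps)
qed

lemma rooted_subdivision_tree: "rooted T'"
  unfolding rooted_tree_def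
proof (intro conjI ballI)
  show "finite (bV T')" "broot T' \<in> bV T'"
    using rooted by (simp_all add: rooted_tree_def subdivision_tree_simps)
  show "bpar T' x \<in> bV T'" if "x \<in> bV T' - {broot T'}" for x
    using that branch_parts(2) rooted_parent_in[OF rooted, of x] by (auto simp: subdivision_tree_simps)
  fix x assume x: "x \<in> bV T'"
  have "broot T \<in> ancestors T' x"
  proof (cases "x = w")
    case True
    then show ?thesis
      using ancestors_subdivision_tree_w rooted_root_in_ancestors[OF rooted branch_parts(2)] by simp
  next
    case False
    then have "x \<in> bV T" using x by (simp add: subdivision_tree_simps)
    then show ?thesis
      using ancestors_subdivision_tree rooted_root_in_ancestors[OF rooted] by simp
  qed
  then have "broot T' \<in> ancestors T' x" by (simp add: subdivision_tree_simps)
  then show "\<exists>n. (bpar T' ^^ n) x = broot T'" by (simp only: root_reachable_iff)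
qed

lemma last_born_child_subdivision_tree:
  assumes x: "x \<in> bV T'" and not_leaf: "\<not> is_leaf T' x"
  shows "blb T' x \<in> children T' x"
proof -
  have "x \<noteq> w" using not_leaf is_leaf_subdivision_tree_w by auto
  then have "x \<in> bV T" using x by (simp add: subdivision_tree_simps)
  then have "blb T x \<in> children T x"
    using not_leaf is_leaf_subdivision_tree burling_last_born_child[OF burling] by simp
  then show ?thesis
    using children_subdivision_tree[OF \<open>x \<in> bV T\<close>] by (cases "x = s") (simp_all add: subdivision_tree_simps)
qed

lemma is_branch_subdivision_tree:
  assumes "is_branch T xs"
  shows "is_branch T' xs"
proof (rule is_branch_parent_cong[OF assms])
  have "set xs \<subseteq> bV T" using assms by (simp add: is_branch_def)
  then show "set xs \<subseteq> bV T'" by (auto simp: subdivision_tree_simps)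
  show "bpar T' x = bpar T x" if "x \<in> set (tl xs)" for x
    using that \<open>set xs \<subseteq> bV T\<close> w_fresh by (cases xs) (auto simp: subdivision_tree_simps)
qed (simp add: subdivision_tree_simps)

lemma bc_subdivision_tree_w:
  "is_branch T' [a, v]" "hd [a, v] = blb T' (bpar T' w)" "bc T' w = set [a, v]"
  using branch_parts(3,6,7) v_in V_in v_ne_w u_ne_w last_born_s
  by (auto simp: is_branch_Cons_Cons subdivision_tree_simps)

lemma bc_subdivision_tree_u:
  "is_branch T' (ys @ [s, w])" "hd (ys @ [s, w]) = blb T' (bpar T' u)" "bc T' u = set (ys @ [s, w])"
proof -
  have "is_branch T' ((ys @ [s]) @ [w])"
    using is_branch_append[of T' "ys @ [s]" "[w]"] is_branch_subdivision_tree[OF branch_parts(1)]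
      w_ne_root by (simp add: subdivision_tree_simps)
  then show "is_branch T' (ys @ [s, w])" by simp
  have "hd (ys @ [s, w]) = hd (ys @ [s, a, v] @ zs)" by (cases ys) simp_all
  then show "hd (ys @ [s, w]) = blb T' (bpar T' u)"
    using hd_branch u_ne_w by (simp add: subdivision_tree_simps)
  show "bc T' u = set (ys @ [s, w])" by (simp add: subdivision_tree_simps)
qed

lemma bc_subdivision_tree_branch:
  assumes z: "z \<in> bV T'" "z \<noteq> broot T'" "\<not> is_last_born T' z"
  shows "\<exists>xs. is_branch T' xs \<and> (xs \<noteq> [] \<longrightarrow> hd xs = blb T' (bpar T' z)) \<and> bc T' z = set xs"
proof -
  consider "z = w" | "z = u" | "z \<noteq> w" "z \<noteq> u" by blast
  then show ?thesis
  proof cases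
    case 3
    then have "z \<in> bV T" "z \<noteq> broot T" "\<not> is_last_born T z"
      using z is_last_born_subdivision_tree by (simp_all add: subdivision_tree_simps)
    then obtain xs where "is_branch T xs" "xs \<noteq> [] \<Longrightarrow> hd xs = blb T (bpar T z)" "bc T z = set xs"
      using burling_bc_branch[OF burling] by metis
    then show ?thesis
      using 3 is_branch_subdivision_tree by (auto simp: subdivision_tree_simps)
  qed (use bc_subdivision_tree_w bc_subdivision_tree_u in blast)+
qed

lemma bc_subdivision_tree_empty:
  assumes z: "z \<in> bV T'" "z = broot T' \<or> is_last_born T' z"
  shows "bc T' z = {}"
proof -
  have "z \<noteq> w"
    using z w_ne_root burling_last_born_in[OF burling] w_fresh is_last_born_subdivision_tree
    by (auto simp: subdivision_tree_simps)
  then have "z \<in> bV T" "z = broot T \<or> is_last_born T z"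
    using z is_last_born_subdivision_tree by (simp_all add: subdivision_tree_simps)
  then have "bc T z = {}" by (rule burling_bc_empty[OF burling])
  moreover have "z \<noteq> u" using calculation bc_u by auto
  ultimately show ?thesis using \<open>z \<noteq> w\<close> by (simp add: subdivision_tree_simps)
qed

lemma burling_tree_subdivision_tree: "burling_tree T'"
  unfolding burling_tree_def
  using rooted_subdivision_tree last_born_child_subdivision_tree bc_subdivision_tree_branch
    bc_subdivision_tree_empty
  by blast

lemma derived_subdivision_tree: "derived T' (insert w V) E'"
  unfolding derived_def
proof (intro conjI ballI)
  show "insert w V \<subseteq> bV T'" using V_in by (auto simp: subdivision_tree_simps)
  show "E' \<subseteq> insert w V \<times> insert w V" using E_in u_in v_in by (auto simp: subdiv_arcs_def)
  have a_ne_w: "a \<noteq> w" using branch_parts(3) w_fresh by auto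
  have no_arc_w: "(x, w) \<notin> E" "(w, x) \<notin> E" for x using E_in V_in w_fresh by auto
  fix x y assume x: "x \<in> insert w V" and y: "y \<in> insert w V"
  consider "x = w" | "x = u" "y = w" | "x = u" "y \<in> V" "y \<noteq> w" | "x \<in> V" "x \<noteq> u" "x \<noteq> w"
    using x y by auto
  then show "(x, y) \<in> E' \<longleftrightarrow> y \<in> bc T' x"
  proof cases
    case 1
    then show ?thesis
      using y a_notin_V a_ne_w u_ne_w no_arc_w by (auto simp: subdiv_arcs_iff subdivision_tree_simps)
  next
    case 3
    then have "(x, y) \<in> E' \<longleftrightarrow> y \<in> bc T u \<and> y \<noteq> v"
      using arc_iff[OF u_in] u_ne_w by (auto simp: subdiv_arcs_iff)
    also have "\<dots> \<longleftrightarrow> y \<in> set (ys @ [s])" using out_neighbour_ne_v_iff 3 by blast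
    also have "\<dots> \<longleftrightarrow> y \<in> bc T' x" using 3 by (simp add: subdivision_tree_simps)
    finally show ?thesis .
  next
    case 4
    have "w \<notin> bc T x"
      using burling_bc_subset[OF burling] 4 V_in w_fresh by blast
    then show ?thesis
      using 4 y arc_iff[OF \<open>x \<in> V\<close>] no_arc_w by (auto simp: subdiv_arcs_iff subdivision_tree_simps)
  qed (simp add: subdiv_arcs_iff subdivision_tree_simps)
qed

lemma out_arcs_w: "(w, x) \<in> E' \<longleftrightarrow> x = v"
  using E_in V_in w_fresh u_ne_w by (auto simp: subdiv_arcs_iff)

lemma out_arcs_u_above_w: "(u, x) \<in> E' \<Longrightarrow> anc T' x w"
proof -
  assume ux: "(u, x) \<in> E'"
  show "anc T' x w"
  proof (cases "x = w")
    case False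
    then have "(u, x) \<in> E" "x \<noteq> v" using ux u_ne_w by (auto simp: subdiv_arcs_iff)
    moreover have "x \<in> V" using \<open>(u, x) \<in> E\<close> E_in by auto
    ultimately have "x \<in> set (ys @ [s])" using out_neighbour_ne_v_iff arc_iff[OF u_in] by blast
    then show ?thesis using above_s_ancestors anc_subdivision_tree_w by simp
  qed (simp add: anc_subdivision_tree_w)
qed

lemma bottom_arc_u_w: "bottom_arc T' E' u w"
  unfolding bottom_arc_def using out_arcs_u_above_w by (simp add: subdiv_arcs_iff)

lemma bottom_arc_w_v: "bottom_arc T' E' w v"
  unfolding bottom_arc_def using out_arcs_w by (simp add: anc_iff_ancestors ancestors.self)

lemma top_arc_w_v: "top_arc T' E' w v"
  unfolding top_arc_def using out_arcs_w by (simp add: anc_iff_ancestors ancestors.self)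

lemma top_arc_subdivision_tree:
  assumes top: "top_arc T E x y" and ne: "(x, y) \<noteq> (u, v)"
  shows "top_arc T' E' x y"
  unfolding top_arc_def
proof (intro conjI allI impI)
  have xy: "(x, y) \<in> E" and above: "\<And>z. (x, z) \<in> E \<Longrightarrow> anc T y z"
    using top by (auto simp: top_arc_def)
  then show "(x, y) \<in> E'" using ne by (simp add: subdiv_arcs_iff)
  have x_ne_w: "x \<noteq> w" using xy E_in V_in w_fresh by auto
  fix z assume xz: "(x, z) \<in> E'"
  show "anc T' y z"
  proof (cases "z = w")
    case True
    then have "x = u" using xz x_ne_w E_in V_in w_fresh by (auto simp: subdiv_arcs_iff)
    then have "(u, y) \<in> E'" using xy ne by (simp add: subdiv_arcs_iff)
    then show ?thesis using out_arcs_u_above_w True by simp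
  next
    case False
    then have "(x, z) \<in> E" using xz x_ne_w by (auto simp: subdiv_arcs_iff)
    then show ?thesis using above anc_subdivision_tree E_in V_in by blast
  qed
qed

lemma bottom_arc_subdivision_tree:
  assumes bot: "bottom_arc T E x y" and ne: "(x, y) \<noteq> (u, v)"
  shows "bottom_arc T' E' x y"
  unfolding bottom_arc_def
proof (intro conjI allI impI)
  have xy: "(x, y) \<in> E" and below: "\<And>z. (x, z) \<in> E \<Longrightarrow> anc T z y"
    using bot by (auto simp: bottom_arc_def)
  then show "(x, y) \<in> E'" using ne by (simp add: subdiv_arcs_iff)
  have x_ne_w: "x \<noteq> w" using xy E_in V_in w_fresh by auto
  have x_ne_u: "x \<noteq> u"
  proof
    assume "x = u"
    then have "anc T v y" "anc T y v" using below uv_arc bottom xy by (auto simp: bottom_arc_def)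
    then have "y = v"
      using ancestors_antisym[OF rooted] v_in V_in by (auto simp: anc_iff_ancestors)
    with \<open>x = u\<close> ne show False by simp
  qed
  fix z assume "(x, z) \<in> E'"
  then have "(x, z) \<in> E" using x_ne_w x_ne_u by (auto simp: subdiv_arcs_iff)
  then show "anc T' z y" using below anc_subdivision_tree xy E_in V_in by blast
qed

end

section \<open>Subdividing a bottom arc\<close>

lemma parent_insertion_siblings:
  assumes burling: "burling_tree T" and u: "u \<in> bV T" and v_bc: "v \<in> bc T u"
    and a: "a \<notin> bV T"
  shows "parent_insertion T (bpar T v) (children T (bpar T v) - {u}) a"
proof -
  have "\<not> is_last_born T u" using burling_bc_empty[OF burling u] v_bc by auto
  have v: "v \<in> bV T" "v \<noteq> broot T"
    using burling_bc_subset[OF burling u] burling_root_notin_bc[OF burling u] v_bc by auto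
  then have q: "bpar T v \<in> bV T" using rooted_parent_in[OF burling_rooted[OF burling]] by blast
  have "blb T (bpar T v) \<in> children T (bpar T v)"
    using burling_last_born_child[OF burling q] parent_not_leaf[OF v] by simp
  moreover have "blb T (bpar T v) \<noteq> u"
    using \<open>\<not> is_last_born T u\<close> q calculation by (auto simp: is_last_born_def is_leaf_def)
  ultimately show ?thesis using burling q a by unfold_locales auto
qed

lemma double_insertion_subdivision:
  assumes burling: "burling_tree T" and derived: "derived T V E" and bottom: "bottom_arc T E u v"
    and "u \<noteq> v" and a1: "a1 \<notin> bV T" and a2: "a2 \<notin> insert a1 (bV T)"
    and w: "w \<notin> insert a1 (insert a2 (bV T))"
  obtains T2 ys zs where "subdivision T2 V E u v w a1 a2 ys zs"
    "\<And>x y. top_arc T2 E x y \<longleftrightarrow> top_arc T E x y"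
    "\<And>x y. bottom_arc T2 E x y \<longleftrightarrow> bottom_arc T E x y"
proof -
  have u: "u \<in> bV T" and v_bc: "v \<in> bc T u"
    using bottom derived by (auto simp: bottom_arc_def derived_def)
  then have u_not_root: "u \<noteq> broot T" and "\<not> is_last_born T u"
    using burling_bc_empty[OF burling u] by auto
  then obtain xs where xs: "is_branch T xs" "xs \<noteq> [] \<Longrightarrow> hd xs = blb T (bpar T u)" "bc T u = set xs"
    using burling_bc_branch[OF burling u] by metis
  define M where "M = children T (bpar T v) - {u}"
  interpret I1: parent_insertion T "bpar T v" M a1
    unfolding M_def using parent_insertion_siblings[OF burling u v_bc a1] .
  interpret I2: parent_insertion I1.T' a1 M a2
    using a2 by (intro I1.parent_insertion_below) (simp add: insert_parent_simps)
  have u_notin_M: "u \<notin> M" by (simp add: M_def)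
  have v_in_M: "v \<in> M"
    using burling_bc_subset[OF burling u] burling_root_notin_bc[OF burling u] v_bc \<open>u \<noteq> v\<close>
    by (auto simp: M_def children_def)
  have u1: "u \<in> bV I1.T'" "u \<noteq> broot I1.T'"
    using u u_not_root by (simp_all add: insert_parent_simps)
  note branch1 = I1.bc_insert_parent_outside[OF u u_not_root u_notin_M xs]
  note branch2 = I2.bc_insert_parent_outside[OF u1 u_notin_M branch1]
  obtain xs1 xs2 where xs_split: "xs = xs1 @ v # xs2"
    using v_bc xs(3) by (metis split_list)
  define ys where "ys = insert_before M a2 (insert_before M a1 xs1)"
  define zs where "zs = insert_before M a2 (insert_before M a1 xs2)"
  have split: "insert_before M a2 (insert_before M a1 xs) = ys @ [a1, a2, v] @ zs"
    using xs_split v_in_M I1.a_notin_M by (simp add: ys_def zs_def)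
  have derived1: "derived I1.T' V E" by (rule I1.derived_insert_parent[OF derived])
  show thesis
  proof (rule that)
    show "top_arc I2.T' E x y \<longleftrightarrow> top_arc T E x y" for x y
      using I2.top_arc_insert_parent[OF derived1] I1.top_arc_insert_parent[OF derived] by simp
    show "bottom_arc I2.T' E x y \<longleftrightarrow> bottom_arc T E x y" for x y
      using I2.bottom_arc_insert_parent[OF derived1] I1.bottom_arc_insert_parent[OF derived] by simp
    then show "subdivision I2.T' V E u v w a1 a2 ys zs"
      using I2.burling_tree_insert_parent I2.derived_insert_parent[OF derived1] bottom branch2 split
        a2 w derived
      by unfold_locales (auto simp: insert_parent_simps derived_def)
  qed
qed

lemma subdivide_bottom_arc_fresh:
  fixes T :: "'a btree"
  assumes infinite: "infinite (UNIV :: 'a set)" and burling: "burling_tree T"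
    and derived: "derived T V E" and bottom: "bottom_arc T E u v" and "u \<noteq> v"
    and w_fresh: "w \<notin> bV T"
  obtains T' where "burling_tree T'" "derived T' (insert w V) (subdiv_arcs E u v w)"
    "bottom_arc T' (subdiv_arcs E u v w) u w" "bottom_arc T' (subdiv_arcs E u v w) w v"
    "top_arc T' (subdiv_arcs E u v w) w v"
    "\<And>x y. top_arc T E x y \<Longrightarrow> (x, y) \<noteq> (u, v) \<Longrightarrow> top_arc T' (subdiv_arcs E u v w) x y"
    "\<And>x y. bottom_arc T E x y \<Longrightarrow> (x, y) \<noteq> (u, v) \<Longrightarrow> bottom_arc T' (subdiv_arcs E u v w) x y"
proof -
  have finite: "finite (insert w (bV T))"
    using burling by (simp add: burling_tree_def rooted_tree_def)
  obtain a1 where a1: "a1 \<notin> insert w (bV T)"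
    using ex_new_if_finite[OF infinite finite] by blast
  obtain a2 where a2: "a2 \<notin> insert a1 (insert w (bV T))"
    using ex_new_if_finite[OF infinite] finite by blast
  obtain T2 ys zs where "subdivision T2 V E u v w a1 a2 ys zs"
    and top2: "\<And>x y. top_arc T2 E x y \<longleftrightarrow> top_arc T E x y"
    and bottom2: "\<And>x y. bottom_arc T2 E x y \<longleftrightarrow> bottom_arc T E x y"
    using double_insertion_subdivision[OF burling derived bottom \<open>u \<noteq> v\<close>, of a1 a2 w] a1 a2 w_fresh
    by auto
  then interpret S: subdivision T2 V E u v w a1 a2 ys zs by simp
  show thesis
    using that S.burling_tree_subdivision_tree S.derived_subdivision_tree S.bottom_arc_u_w
      S.bottom_arc_w_v S.top_arc_w_v S.top_arc_subdivision_tree S.bottom_arc_subdivision_tree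
      top2 bottom2
    by blast
qed

theorem lemma3p6:
  fixes T :: "'a btree" and V :: "'a set" and E :: "('a \<times> 'a) set" and u v w :: 'a
  assumes "infinite (UNIV :: 'a set)"
    and "burling_tree T"
    and "oriented_graph V E"
    and "derived T V E"
    and "bottom_arc T E u v"
    and "w \<notin> V"
  shows "\<exists>T'. burling_tree T' \<and> derived T' (insert w V) (subdiv_arcs E u v w)
     \<and> bottom_arc T' (subdiv_arcs E u v w) u w
     \<and> bottom_arc T' (subdiv_arcs E u v w) w v
     \<and> top_arc T' (subdiv_arcs E u v w) w v
     \<and> (\<forall>a b. top_arc T E a b \<and> (a, b) \<noteq> (u, v) \<longrightarrow> top_arc T' (subdiv_arcs E u v w) a b)
     \<and> (\<forall>a b. bottom_arc T E a b \<and> (a, b) \<noteq> (u, v) \<longrightarrow> bottom_arc T' (subdiv_arcs E u v w) a b)"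
proof -
  obtain T0 where T0: "burling_tree T0" "derived T0 V E" "w \<notin> bV T0"
    and top0: "\<And>x y. top_arc T0 E x y \<longleftrightarrow> top_arc T E x y"
    and bottom0: "\<And>x y. bottom_arc T0 E x y \<longleftrightarrow> bottom_arc T E x y"
    using burling_tree_avoiding_vertex[OF assms(1,2,4,6)] by metis
  have "bottom_arc T0 E u v" using assms(5) bottom0 by simp
  moreover have "u \<noteq> v"
    using assms(3,5) by (auto simp: oriented_graph_def bottom_arc_def)
  ultimately obtain T' where "burling_tree T'" "derived T' (insert w V) (subdiv_arcs E u v w)"
    "bottom_arc T' (subdiv_arcs E u v w) u w" "bottom_arc T' (subdiv_arcs E u v w) w v"
    "top_arc T' (subdiv_arcs E u v w) w v"
    "\<And>x y. top_arc T0 E x y \<Longrightarrow> (x, y) \<noteq> (u, v) \<Longrightarrow> top_arc T' (subdiv_arcs E u v w) x y"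
    "\<And>x y. bottom_arc T0 E x y \<Longrightarrow> (x, y) \<noteq> (u, v) \<Longrightarrow> bottom_arc T' (subdiv_arcs E u v w) x y"
    using subdivide_bottom_arc_fresh[OF assms(1) T0(1,2)] T0(3) by metis
  then show ?thesis using top0 bottom0 by blast
qed

end
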